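(* Let $\Omega$ be a program with weight constraints and let $\Pi_1$ be the program with nested expressions consisting of the rules $l\leftarrow\mathit{not}\,\mathit{not}\,l,[C_1],\dots,[C_n]$ for every rule $C_0\leftarrow C_1,\dots,C_n$ of $\Omega$ and every positive head element $l$ of that rule. For any consistent sets $Z,Z'$ of literals, $Z'$ satisfies $\Omega^Z$ iff $Z'\models\Pi_1^Z$.
   Context: A literal is an atom $a$ or $\neg a$; a set of literals is consistent if it contains no pair $a,\neg a$. Formulas are built from literals, $\bot$, $\top$ using $\mathit{not}$, "," (conjunction), ";" (disjunction). For consistent $Z$: $Z\models l$ iff $l\in Z$; $Z\models\top$; $Z\not\models\bot$; $Z\models(F,G)$ iff both; $Z\models(F;G)$ iff at least one; $Z\models\mathit{not}\,F$ iff $Z\not\models F$; $Z$ satisfies a set of rules $\mathit{Head}\leftarrow\mathit{Body}$ if $Z\models\mathit{Body}$ implies $Z\models\mathit{Head}$ for each. Reduct: $F^Z=F$ for $F$ a literal, $\bot$, $\top$; $(F,G)^Z=F^Z,G^Z$; $(F;G)^Z=F^Z;G^Z$; $(\mathit{not}\,F)^Z=\bot$ if $Z\models F$, else $\top$; $\Pi^Z$ applies this to heads and bodies. $\langle F_1,\dots,F_n\rangle:X$ is the disjunction over $I\in X$ of the conjunctions of $F_i$, $i\in I$ (empty conjunction $\top$, empty disjunction $\bot$). A rule element is a literal $l$ (positive) or $\mathit{not}\,l$ (negative). A weight constraint is $L\le\{c_1=w_1,\dots,c_m=w_m\}\le U$ ($L,U$ reals or $\pm\infty$, $w_i\ge0$);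 $Z$ satisfies it if $L\le\sum_{j:Z\models c_j}w_j\le U$. A program with weight constraints is a set of rules $C_0\leftarrow C_1,\dots,C_n$; the rule elements of $C_0$ are the head elements; $Z$ satisfies a set of such rules if for each rule, whenever $Z$ satisfies $C_1,\dots,C_n$ it satisfies $C_0$ (a literal $l$ in a head is identified with $1\le\{l=1\}$). $(L\le S)^Z=L^Z\le S'$, where $S'$ drops the pairs with negative elements and $L^Z$ is $L$ minus the sum of weights of pairs $c=w$ with $c$ negative and $Z\models c$. The reduct of $L_0\le S_0\le U_0\leftarrow L_1\le S_1\le U_1,\dots,L_n\le S_n\le U_n$ is, if $Z$ satisfies $S_i\le U_i$ for all $1\le i\le n$, the set of rules $l\leftarrow(L_1\le S_1)^Z,\dots,(L_n\le S_n)^Z$ for all positive head elements $l$ with $l\in Z$; otherwise empty. $\Omega^Z$ is the union of the reducts of its rules. Translation: $[w\le S]=\langle c_1,\dots,c_m\rangle:\{I: w\le\sum_{i\in I}w_i\}$, $[w<S]=\langle c_1,\dots,c_m\rangle:\{I: w<\sum_{i\in I}w_i\}$, $[S\le U]=\mathit{not}\,[U<S]$, $[L\le S\le U]=[L\le S],[S\le U]$. *)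

theory Defs
  imports Complex_Main "HOL-Library.Extended_Real"
begin

datatype 'a lit = Pos 'a | Neg 'a

definition consistent :: "'a lit set \<Rightarrow> bool" where
  "consistent Z \<longleftrightarrow> (\<forall>a. \<not> (Pos a \<in> Z \<and> Neg a \<in> Z))"

datatype 'a form = FLit "'a lit" | FBot | FTop | FNot "'a form"
  | FConj "'a form" "'a form" | FDisj "'a form" "'a form"

fun sat :: "'a lit set \<Rightarrow> 'a form \<Rightarrow> bool" where
  "sat Z (FLit l) = (l \<in> Z)"
| "sat Z FBot = False"
| "sat Z FTop = True"
| "sat Z (FConj F G) = (sat Z F \<and> sat Z G)"
| "sat Z (FDisj F G) = (sat Z F \<or> sat Z G)"
| "sat Z (FNot F) = (\<not> sat Z F)"

type_synonym 'a nrule = "'a form \<times> 'a form"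

definition sat_prog :: "'a lit set \<Rightarrow> 'a nrule set \<Rightarrow> bool" where
  "sat_prog Z \<Pi> \<longleftrightarrow> (\<forall>(H, B) \<in> \<Pi>. sat Z B \<longrightarrow> sat Z H)"

fun freduct :: "'a lit set \<Rightarrow> 'a form \<Rightarrow> 'a form" where
  "freduct Z (FLit l) = FLit l"
| "freduct Z FBot = FBot"
| "freduct Z FTop = FTop"
| "freduct Z (FConj F G) = FConj (freduct Z F) (freduct Z G)"
| "freduct Z (FDisj F G) = FDisj (freduct Z F) (freduct Z G)"
| "freduct Z (FNot F) = (if sat Z F then FBot else FTop)"

definition preduct :: "'a nrule set \<Rightarrow> 'a lit set \<Rightarrow> 'a nrule set" where
  "preduct \<Pi> Z = (\<lambda>(H, B). (freduct Z H, freduct Z B)) ` \<Pi>"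

definition conj_list :: "'a form list \<Rightarrow> 'a form" where
  "conj_list Fs = foldr FConj Fs FTop"

definition disj_list :: "'a form list \<Rightarrow> 'a form" where
  "disj_list Fs = foldr FDisj Fs FBot"

text \<open>\<langle>F_1,...,F_n\<rangle>:X, with index sets I \<subseteq> {0..<n} (0-based indexing); each subset
  of the index set is enumerated exactly once via subseqs.\<close>
definition tuple_form :: "'a form list \<Rightarrow> nat set set \<Rightarrow> 'a form" where
  "tuple_form Fs X = disj_list (map (\<lambda>I. conj_list (map (\<lambda>i. Fs ! i) I))
      (filter (\<lambda>I. set I \<in> X) (subseqs [0..<length Fs])))"

datatype 'a elem = PosE "'a lit" | NegE "'a lit"

fun elem_sat :: "'a lit set \<Rightarrow> 'a elem \<Rightarrow> bool" where
  "elem_sat Z (PosE l) = (l \<in> Z)"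
| "elem_sat Z (NegE l) = (l \<notin> Z)"

fun elem_form :: "'a elem \<Rightarrow> 'a form" where
  "elem_form (PosE l) = FLit l"
| "elem_form (NegE l) = FNot (FLit l)"

datatype 'a wc = WC ereal "('a elem \<times> real) list" ereal

fun wc_lower :: "'a wc \<Rightarrow> ereal" where "wc_lower (WC L S U) = L"
fun wc_set :: "'a wc \<Rightarrow> ('a elem \<times> real) list" where "wc_set (WC L S U) = S"
fun wc_upper :: "'a wc \<Rightarrow> ereal" where "wc_upper (WC L S U) = U"

definition wsum :: "'a lit set \<Rightarrow> ('a elem \<times> real) list \<Rightarrow> real" where
  "wsum Z S = sum_list (map (\<lambda>(c, w). if elem_sat Z c then w else 0) S)"

fun wc_sat :: "'a lit set \<Rightarrow> 'a wc \<Rightarrow> bool" where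
  "wc_sat Z (WC L S U) = (L \<le> ereal (wsum Z S) \<and> ereal (wsum Z S) \<le> U)"

text \<open>A rule C_0 <- C_1, ..., C_n (head, list of body constraints). A literal l in a head
  is represented as 1 \<le> {l = 1} \<le> \<infinity>.\<close>
type_synonym 'a wrule = "'a wc \<times> 'a wc list"

definition wsat_prog :: "'a lit set \<Rightarrow> 'a wrule set \<Rightarrow> bool" where
  "wsat_prog Z \<Omega> \<longleftrightarrow> (\<forall>(C0, Cs) \<in> \<Omega>. (\<forall>C \<in> set Cs. wc_sat Z C) \<longrightarrow> wc_sat Z C0)"

definition weights_nonneg :: "'a wrule set \<Rightarrow> bool" where
  "weights_nonneg \<Omega> \<longleftrightarrow> (\<forall>(C0, Cs) \<in> \<Omega>. \<forall>C \<in> set (C0 # Cs). \<forall>(c, w) \<in> set (wc_set C). 0 \<le> w)"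

definition pos_head_elems :: "'a wc \<Rightarrow> 'a lit set" where
  "pos_head_elems C0 = {l. \<exists>w. (PosE l, w) \<in> set (wc_set C0)}"

definition lit_wc :: "'a lit \<Rightarrow> 'a wc" where
  "lit_wc l = WC 1 [(PosE l, 1)] \<infinity>"

text \<open>(L \<le> S)^Z = L^Z \<le> S' (upper bound \<infinity>)\<close>
fun lower_reduct :: "'a lit set \<Rightarrow> 'a wc \<Rightarrow> 'a wc" where
  "lower_reduct Z (WC L S U) =
     WC (L - ereal (sum_list (map (\<lambda>(c, w). case c of NegE l \<Rightarrow> if elem_sat Z c then w else 0
                                                 | PosE l \<Rightarrow> 0) S)))
        (filter (\<lambda>(c, w). case c of PosE l \<Rightarrow> True | NegE l \<Rightarrow> False) S) \<infinity>"

definition wrule_reduct :: "'a lit set \<Rightarrow> 'a wrule \<Rightarrow> 'a wrule set" where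
  "wrule_reduct Z r = (case r of (C0, Cs) \<Rightarrow>
     if (\<forall>C \<in> set Cs. ereal (wsum Z (wc_set C)) \<le> wc_upper C)
     then {(lit_wc l, map (lower_reduct Z) Cs) | l. l \<in> pos_head_elems C0 \<and> l \<in> Z}
     else {})"

definition wreduct :: "'a wrule set \<Rightarrow> 'a lit set \<Rightarrow> 'a wrule set" where
  "wreduct \<Omega> Z = (\<Union>r \<in> \<Omega>. wrule_reduct Z r)"

definition tr_lower :: "ereal \<Rightarrow> ('a elem \<times> real) list \<Rightarrow> 'a form" where
  "tr_lower L S = tuple_form (map (elem_form \<circ> fst) S)
      {I. L \<le> ereal (\<Sum>i\<in>I. snd (S ! i))}"

definition tr_strict :: "ereal \<Rightarrow> ('a elem \<times> real) list \<Rightarrow> 'a form" where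
  "tr_strict L S = tuple_form (map (elem_form \<circ> fst) S)
      {I. L < ereal (\<Sum>i\<in>I. snd (S ! i))}"

fun tr_wc :: "'a wc \<Rightarrow> 'a form" where
  "tr_wc (WC L S U) = FConj (tr_lower L S) (FNot (tr_strict U S))"

definition Pi1 :: "'a wrule set \<Rightarrow> 'a nrule set" where
  "Pi1 \<Omega> = {(FLit l, conj_list (FNot (FNot (FLit l)) # map tr_wc Cs)) | l C0 Cs.
               (C0, Cs) \<in> \<Omega> \<and> l \<in> pos_head_elems C0}"

end

theory Submission
  imports Defs
begin

text \<open>Under the reduct with respect to \<open>Z\<close>, a negative element \<open>not l\<close> of a weight constraint
  becomes the constant \<open>l \<notin> Z\<close>, so in the translation \<open>[L \<le> S]\<^sup>Z\<close> its weight simply joins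
  the weights of the true positive elements; this is exactly the satisfaction of \<open>L\<^sup>Z \<le> S'\<close>.
  Since weights are nonnegative, the disjunction over index sets reaching the bound is
  equivalent to the single condition on the total weight of all satisfied elements. The
  upper bound \<open>not [U < S]\<close> and the conjunct \<open>not not l\<close> reduce to the constants
  \<open>Z \<Turnstile> S \<le> U\<close> and \<open>l \<in> Z\<close>, which are precisely the side conditions under which the
  reduct \<open>\<Omega>\<^sup>Z\<close> contains the rule \<open>l \<leftarrow> \<dots>\<close>.\<close>

lemma sat_freduct_conj_list:
  "sat Z' (freduct Z (conj_list Fs)) \<longleftrightarrow> (\<forall>F\<in>set Fs. sat Z' (freduct Z F))"
  by (induct Fs) (auto simp: conj_list_def)

lemma sat_freduct_disj_list:
  "sat Z' (freduct Z (disj_list Fs)) \<longleftrightarrow> (\<exists>F\<in>set Fs. sat Z' (freduct Z F))"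
  by (induct Fs) (auto simp: disj_list_def)

lemma sat_freduct_self: "sat Z (freduct Z F) \<longleftrightarrow> sat Z F"
  by (induct F) auto

lemma sat_freduct_tuple_form:
  "sat Z' (freduct Z (tuple_form Fs X)) \<longleftrightarrow>
   (\<exists>J\<subseteq>{..<length Fs}. J \<in> X \<and> (\<forall>i\<in>J. sat Z' (freduct Z (Fs ! i))))"
proof -
  have "sat Z' (freduct Z (tuple_form Fs X)) \<longleftrightarrow>
    (\<exists>J\<in>set ` set (subseqs [0..<length Fs]). J \<in> X \<and> (\<forall>i\<in>J. sat Z' (freduct Z (Fs ! i))))"
    unfolding tuple_form_def by (auto simp: sat_freduct_disj_list sat_freduct_conj_list)
  also have "set ` set (subseqs [0..<length Fs]) = Pow {..<length Fs}"
    by (simp add: subseqs_powset atLeast0LessThan)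
  finally show ?thesis by blast
qed

lemma ex_subset_sum_threshold_iff:
  fixes w :: "'i \<Rightarrow> real"
  assumes "finite A" and nonneg: "\<And>i. i \<in> A \<Longrightarrow> 0 \<le> w i"
    and up_closed: "\<And>x y. x \<le> y \<Longrightarrow> Q x \<Longrightarrow> Q y"
  shows "(\<exists>J\<subseteq>A. Q (sum w J) \<and> (\<forall>i\<in>J. P i)) \<longleftrightarrow> Q (\<Sum>i\<in>{i\<in>A. P i}. w i)"
proof
  assume "\<exists>J\<subseteq>A. Q (sum w J) \<and> (\<forall>i\<in>J. P i)"
  then obtain J where J: "J \<subseteq> A" "Q (sum w J)" "\<forall>i\<in>J. P i" by blast
  have "sum w J \<le> (\<Sum>i\<in>{i\<in>A. P i}. w i)"
    using J nonneg \<open>finite A\<close> by (intro sum_mono2) auto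
  with J(2) show "Q (\<Sum>i\<in>{i\<in>A. P i}. w i)" by (rule up_closed[rotated])
next
  assume "Q (\<Sum>i\<in>{i\<in>A. P i}. w i)"
  then show "\<exists>J\<subseteq>A. Q (sum w J) \<and> (\<forall>i\<in>J. P i)"
    by (intro exI[of _ "{i\<in>A. P i}"]) auto
qed

lemma sum_filter_nth_eq_sum_list:
  fixes S :: "('c \<times> 'b::comm_monoid_add) list"
  shows "(\<Sum>i\<in>{i\<in>{..<length S}. P (fst (S ! i))}. snd (S ! i))
       = sum_list (map (\<lambda>(c, w). if P c then w else 0) S)"
proof -
  have "sum_list (map (\<lambda>(c, w). if P c then w else 0) S)
      = (\<Sum>i\<in>{..<length S}. if P (fst (S ! i)) then snd (S ! i) else 0)"
    by (simp add: sum_list_sum_nth atLeast0LessThan case_prod_beta)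
  also have "\<dots> = (\<Sum>i\<in>{i\<in>{..<length S}. P (fst (S ! i))}. snd (S ! i))"
    by (subst sum.inter_filter) auto
  finally show ?thesis ..
qed

lemma sum_list_freduct_elem_split:
  "sum_list (map (\<lambda>(c, w). if sat Z' (freduct Z (elem_form c)) then w else 0) S)
   = wsum Z' (filter (\<lambda>(c, w). case c of PosE l \<Rightarrow> True | NegE l \<Rightarrow> False) S)
     + sum_list (map (\<lambda>(c, w). case c of NegE l \<Rightarrow> if elem_sat Z c then w else 0
                                                 | PosE l \<Rightarrow> 0) S)"
  by (induct S) (auto simp: wsum_def split: elem.splits)

lemma sat_elem_form: "sat Z (elem_form c) \<longleftrightarrow> elem_sat Z c"
  by (cases c) auto

lemma sat_freduct_tr_wc:
  assumes "\<forall>(c, w)\<in>set (wc_set C). 0 \<le> w"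
  shows "sat Z' (freduct Z (tr_wc C)) \<longleftrightarrow>
    wc_sat Z' (lower_reduct Z C) \<and> ereal (wsum Z (wc_set C)) \<le> wc_upper C"
proof (cases C)
  case (WC L S U)
  have nonneg: "\<And>i. i \<in> {..<length S} \<Longrightarrow> 0 \<le> snd (S ! i)"
    using assms WC by (force dest: nth_mem)
  have lower: "sat Z' (freduct Z (tr_lower L S)) \<longleftrightarrow> wc_sat Z' (lower_reduct Z C)"
  proof -
    let ?P = "\<lambda>c. sat Z' (freduct Z (elem_form c))"
    have "sat Z' (freduct Z (tr_lower L S)) \<longleftrightarrow>
      (\<exists>J\<subseteq>{..<length S}. L \<le> ereal (\<Sum>i\<in>J. snd (S ! i)) \<and> (\<forall>i\<in>J. ?P (fst (S ! i))))"
      unfolding tr_lower_def sat_freduct_tuple_form by (auto 0 3 simp: subset_iff)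
    also have "\<dots> \<longleftrightarrow> L \<le> ereal (\<Sum>i\<in>{i\<in>{..<length S}. ?P (fst (S ! i))}. snd (S ! i))"
      by (rule ex_subset_sum_threshold_iff) (use nonneg in \<open>auto elim: order_trans\<close>)
    also have "\<dots> \<longleftrightarrow> wc_sat Z' (lower_reduct Z C)"
      unfolding sum_filter_nth_eq_sum_list[where P = ?P] sum_list_freduct_elem_split
      using WC by (simp add: ereal_minus_le)
    finally show ?thesis .
  qed
  have upper: "sat Z (tr_strict U S) \<longleftrightarrow> U < ereal (wsum Z S)"
  proof -
    have "sat Z (tr_strict U S) \<longleftrightarrow> sat Z (freduct Z (tr_strict U S))"
      by (simp only: sat_freduct_self)
    also have "\<dots> \<longleftrightarrow>
      (\<exists>J\<subseteq>{..<length S}. U < ereal (\<Sum>i\<in>J. snd (S ! i)) \<and> (\<forall>i\<in>J. elem_sat Z (fst (S ! i))))"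
      unfolding tr_strict_def sat_freduct_tuple_form
      by (auto 0 3 simp: subset_iff sat_freduct_self sat_elem_form)
    also have "\<dots> \<longleftrightarrow> U < ereal (\<Sum>i\<in>{i\<in>{..<length S}. elem_sat Z (fst (S ! i))}. snd (S ! i))"
      by (rule ex_subset_sum_threshold_iff) (use nonneg in \<open>auto elim: less_le_trans\<close>)
    also have "\<dots> \<longleftrightarrow> U < ereal (wsum Z S)"
      unfolding sum_filter_nth_eq_sum_list wsum_def ..
    finally show ?thesis .
  qed
  show ?thesis
    using lower upper WC by (auto simp: not_less)
qed

lemma wsat_prog_wreduct_iff:
  "wsat_prog Z' (wreduct \<Omega> Z) \<longleftrightarrow>
   (\<forall>(C0, Cs)\<in>\<Omega>. \<forall>l\<in>pos_head_elems C0. l \<in> Z \<longrightarrow>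
      (\<forall>C\<in>set Cs. ereal (wsum Z (wc_set C)) \<le> wc_upper C \<and> wc_sat Z' (lower_reduct Z C)) \<longrightarrow>
      l \<in> Z')"
proof -
  have lit: "wc_sat Z' (lit_wc l) \<longleftrightarrow> l \<in> Z'" for l
    by (simp add: lit_wc_def wsum_def)
  show ?thesis
    unfolding wsat_prog_def wreduct_def wrule_reduct_def
    by (fastforce simp: lit split: if_splits)
qed

lemma sat_prog_preduct_Pi1_iff:
  "sat_prog Z' (preduct (Pi1 \<Omega>) Z) \<longleftrightarrow>
   (\<forall>(C0, Cs)\<in>\<Omega>. \<forall>l\<in>pos_head_elems C0. l \<in> Z \<longrightarrow>
      (\<forall>C\<in>set Cs. sat Z' (freduct Z (tr_wc C))) \<longrightarrow> l \<in> Z')"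
  unfolding sat_prog_def preduct_def Pi1_def
  by (fastforce simp: sat_freduct_conj_list)

theorem lemma6:
  fixes \<Omega> :: "'a wrule set" and Z Z' :: "'a lit set"
  assumes "weights_nonneg \<Omega>"
    and "consistent Z" and "consistent Z'"
  shows "wsat_prog Z' (wreduct \<Omega> Z) \<longleftrightarrow> sat_prog Z' (preduct (Pi1 \<Omega>) Z)"
proof -
  have "sat Z' (freduct Z (tr_wc C)) \<longleftrightarrow>
      wc_sat Z' (lower_reduct Z C) \<and> ereal (wsum Z (wc_set C)) \<le> wc_upper C"
    if "(C0, Cs) \<in> \<Omega>" and "C \<in> set Cs" for C0 Cs C
    using assms(1) that unfolding weights_nonneg_def by (intro sat_freduct_tr_wc) fastforce
  then show ?thesis
    unfolding wsat_prog_wreduct_iff sat_prog_preduct_Pi1_iff by fastforce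
qed

end
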